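(* Let $A$ be an algebra of Engel type and let $I$ be a sandwich ideal of $A$. If $A/I$ is a Yagzhev algebra, then $A$ is a Yagzhev algebra.
   Context: An algebra here is a vector space $A$ over a field $\Bbbk$ of characteristic zero equipped with finitely many symmetric multilinear operations $\Psi_\ell:A^\ell\to A$, $2\le\ell\le m$. An ideal is a subspace $I$ such that $\Psi_\ell(a_1,\dots,a_\ell)\in I$ whenever some $a_i\in I$. A monomial is a formal expression built from variables by applying the operations $\Psi_\ell$; its degree is the number of occurrences of variables. $I$ is a sandwich ideal if for every $k\ge0$, every multilinear monomial $M(z_1,z_2,x_1,\dots,x_k)$ of degree $k+2$, every $z_1,z_2\in I$ and every $x_1,\dots,x_k\in A$, one has $M(z_1,z_2,x_1,\dots,x_k)=0$. Terms: $x$ is a term with $|x|=1$; if $t_1,\dots,t_\ell$ are terms then $\Psi_\ell(t_1,\dots,t_\ell)$ is a term with $|\cdot|=\sum|t_i|$ (distinct formal expressions are distinct terms). $A$ is a Yagzhev algebra if there is $q_0$ with $\sum_{|t|=q}t(a)=0$ for all $a\in A$ and all $q\ge q_0$. For $x\in A$ let $\mathrm{Ad}_{\ell-1}(x)$ be the linear map $y\mapsto\Psi_\ell(y,x,\dots,x)$, and let $E_s(x)=\sum \ell_1\cdots\ell_q\,\mathrm{Ad}_{\ell_1-1}(x)\circ\cdots\circ\mathrm{Ad}_{\ell_q-1}(x)$, summed over all $q\ge1$ and sequences with $2\le\ell_i\le m$ and $\sum(\ell_i-1)=s$ (the degree-$s$ component of $\sum_{k\ge0}(\sum_\ell\ell\,\mathrm{Ad}_{\ell-1}(x))^k$).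 $A$ is of Engel type if there is $s_0$ with $E_s(x)=0$ for all $x\in A$ and all $s\ge s_0$. *)

theory Defs
  imports Complex_Main "HOL-Library.Multiset"
begin

text \<open>Formal expressions built from variables (indexed by naturals) by applying
  the operations; an application node with list of children ts stands for the
  operation of arity length ts.\<close>
datatype tm = V nat | Op "tm list"

fun wf_tm :: "nat \<Rightarrow> tm \<Rightarrow> bool" where
  "wf_tm m (V i) = True"
| "wf_tm m (Op ts) = (2 \<le> length ts \<and> length ts \<le> m \<and> (\<forall>t\<in>set ts. wf_tm m t))"

fun leaves :: "tm \<Rightarrow> nat list" where
  "leaves (V i) = [i]"
| "leaves (Op ts) = concat (map leaves ts)"

definition deg :: "tm \<Rightarrow> nat" where
  "deg t = length (leaves t)"

fun eval_tm :: "(nat \<Rightarrow> 'a list \<Rightarrow> 'a) \<Rightarrow> (nat \<Rightarrow> 'a) \<Rightarrow> tm \<Rightarrow> 'a" where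
  "eval_tm Psi \<rho> (V i) = \<rho> i"
| "eval_tm Psi \<rho> (Op ts) = Psi (length ts) (map (eval_tm Psi \<rho>) ts)"

definition multilinear_op :: "('k::field_char_0 \<Rightarrow> 'a \<Rightarrow> 'a) \<Rightarrow> nat \<Rightarrow> ('a::ab_group_add list \<Rightarrow> 'a) \<Rightarrow> bool" where
  "multilinear_op scale l f \<longleftrightarrow>
     (\<forall>xs i u v c. length xs = l \<and> i < l \<longrightarrow>
        f (xs[i := scale c u + v]) = scale c (f (xs[i := u])) + f (xs[i := v]))"

definition symmetric_op :: "nat \<Rightarrow> ('a list \<Rightarrow> 'a) \<Rightarrow> bool" where
  "symmetric_op l f \<longleftrightarrow> (\<forall>xs ys. length xs = l \<and> mset xs = mset ys \<longrightarrow> f xs = f ys)"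

definition algebra_ops :: "('k::field_char_0 \<Rightarrow> 'a::ab_group_add \<Rightarrow> 'a) \<Rightarrow> nat \<Rightarrow> (nat \<Rightarrow> 'a list \<Rightarrow> 'a) \<Rightarrow> bool" where
  "algebra_ops scale m Psi \<longleftrightarrow> vector_space scale \<and>
     (\<forall>l. 2 \<le> l \<and> l \<le> m \<longrightarrow> multilinear_op scale l (Psi l) \<and> symmetric_op l (Psi l))"

definition is_ideal :: "('k::field_char_0 \<Rightarrow> 'a::ab_group_add \<Rightarrow> 'a) \<Rightarrow> nat \<Rightarrow> (nat \<Rightarrow> 'a list \<Rightarrow> 'a) \<Rightarrow> 'a set \<Rightarrow> bool" where
  "is_ideal scale m Psi I \<longleftrightarrow> module.subspace scale I \<and>
     (\<forall>l xs. 2 \<le> l \<and> l \<le> m \<and> length xs = l \<and> (\<exists>x\<in>set xs. x \<in> I) \<longrightarrow> Psi l xs \<in> I)"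

text \<open>Sandwich ideal: every multilinear monomial M(z1,z2,x1,...,xk) (variables
  0,1 are z1,z2; variable i+2 is x_(i+1)) vanishes when z1, z2 are in I.\<close>
definition sandwich_ideal :: "('k::field_char_0 \<Rightarrow> 'a::ab_group_add \<Rightarrow> 'a) \<Rightarrow> nat \<Rightarrow> (nat \<Rightarrow> 'a list \<Rightarrow> 'a) \<Rightarrow> 'a set \<Rightarrow> bool" where
  "sandwich_ideal scale m Psi I \<longleftrightarrow> is_ideal scale m Psi I \<and>
     (\<forall>k M z1 z2 xs. wf_tm m M \<and> mset (leaves M) = mset [0..<k+2] \<and>
        z1 \<in> I \<and> z2 \<in> I \<and> length xs = k \<longrightarrow>
        eval_tm Psi (\<lambda>i. if i = 0 then z1 else if i = 1 then z2 else xs ! (i - 2)) M = 0)"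

text \<open>Terms in the single variable x (represented by V 0) of degree q.\<close>
definition terms_deg :: "nat \<Rightarrow> nat \<Rightarrow> tm set" where
  "terms_deg m q = {t. wf_tm m t \<and> set (leaves t) \<subseteq> {0} \<and> deg t = q}"

text \<open>The quotient algebra A/I is Yagzhev: the Yagzhev sums lie in I
  (i.e. vanish modulo I).  Yagzhev for A itself is the case I = {0}.\<close>
definition yagzhev_mod :: "nat \<Rightarrow> (nat \<Rightarrow> 'a::ab_group_add list \<Rightarrow> 'a) \<Rightarrow> 'a set \<Rightarrow> bool" where
  "yagzhev_mod m Psi I \<longleftrightarrow> (\<exists>q0. \<forall>a q. q0 \<le> q \<longrightarrow>
      (\<Sum>t\<in>terms_deg m q. eval_tm Psi (\<lambda>_. a) t) \<in> I)"

definition yagzhev :: "nat \<Rightarrow> (nat \<Rightarrow> 'a::ab_group_add list \<Rightarrow> 'a) \<Rightarrow> bool" where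
  "yagzhev m Psi \<longleftrightarrow> (\<exists>q0. \<forall>a q. q0 \<le> q \<longrightarrow>
      (\<Sum>t\<in>terms_deg m q. eval_tm Psi (\<lambda>_. a) t) = 0)"

text \<open>Ad_(l-1)(x) y = Psi_l(y,x,...,x).\<close>
definition Ad :: "(nat \<Rightarrow> 'a list \<Rightarrow> 'a) \<Rightarrow> nat \<Rightarrow> 'a \<Rightarrow> 'a \<Rightarrow> 'a" where
  "Ad Psi l x y = Psi l (y # replicate (l - 1) x)"

definition engel_seqs :: "nat \<Rightarrow> nat \<Rightarrow> nat list set" where
  "engel_seqs m s = {ls. ls \<noteq> [] \<and> (\<forall>l\<in>set ls. 2 \<le> l \<and> l \<le> m) \<and>
                         sum_list (map (\<lambda>l. l - 1) ls) = s}"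

definition E_op :: "('k::field_char_0 \<Rightarrow> 'a::ab_group_add \<Rightarrow> 'a) \<Rightarrow> nat \<Rightarrow> (nat \<Rightarrow> 'a list \<Rightarrow> 'a)
                     \<Rightarrow> nat \<Rightarrow> 'a \<Rightarrow> 'a \<Rightarrow> 'a" where
  "E_op scale m Psi s x y =
     (\<Sum>ls\<in>engel_seqs m s. scale (of_nat (prod_list ls))
         (foldr (\<lambda>l f. Ad Psi l x \<circ> f) ls id y))"

definition engel_type :: "('k::field_char_0 \<Rightarrow> 'a::ab_group_add \<Rightarrow> 'a) \<Rightarrow> nat \<Rightarrow> (nat \<Rightarrow> 'a list \<Rightarrow> 'a) \<Rightarrow> bool" where
  "engel_type scale m Psi \<longleftrightarrow> (\<exists>s0. \<forall>s x y. s0 \<le> s \<longrightarrow> E_op scale m Psi s x y = 0)"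

end

theory Submission
  imports Defs
begin

text \<open>Fix a and let f q be the Yagzhev sum of degree q at a, so that f q is the sum of
  Psi_l (f d_1, ..., f d_l) over all l and all compositions d_1 + ... + d_l = q.
  From some q0 on all f q lie in I, so above a threshold every summand with two parts of degree
  at least q0 vanishes by the sandwich property, and by symmetry the recursion becomes
  v = w + L v for the high-degree part v of f, where w has bounded degree and L is the graded
  version of the sum of l Ad_(l-1)(x), x being the low-degree part of f.
  Substituting a scalar c into the low-degree part and comparing coefficients of c turns the
  Engel condition into the vanishing of the graded E_s for large s; hence the geometric series
  of the E_s w is finite and solves the same equation.  Since L raises degree the solution is
  unique, so v vanishes beyond a bound that depends only on m, q0 and the Engel bound.\<close>

lemma in_listset_iff: "xs \<in> listset As \<longleftrightarrow> list_all2 (\<in>) xs As"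
  by (induction As arbitrary: xs) (auto simp: set_Cons_def list_all2_Cons2)

lemma listset_Cons_image: "listset (A # As) = (\<lambda>(a, as). a # as) ` (A \<times> listset As)"
  by (auto simp: set_Cons_def)

lemma finite_listset: "\<forall>A\<in>set As. finite A \<Longrightarrow> finite (listset As)"
  by (induction As) (auto simp del: listset.simps(2) simp: listset_Cons_image)

lemma listset_replicate: "listset (replicate k A) = {xs. length xs = k \<and> set xs \<subseteq> A}"
  by (auto simp: in_listset_iff list_all2_conv_all_nth in_set_conv_nth) (metis nth_mem subsetD)

lemma sum_listset_Cons:
  assumes "finite A" "\<forall>A\<in>set As. finite A"
  shows "(\<Sum>xs\<in>listset (A # As). g xs) = (\<Sum>a\<in>A. \<Sum>as\<in>listset As. g (a # as))"
proof -
  have "(\<Sum>xs\<in>listset (A # As). g xs) = (\<Sum>(a, as)\<in>A \<times> listset As. g (a # as))"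
    unfolding listset_Cons_image by (subst sum.reindex) (auto simp: inj_on_def case_prod_unfold)
  also have "\<dots> = (\<Sum>a\<in>A. \<Sum>as\<in>listset As. g (a # as))"
    using assms by (simp add: sum.cartesian_product finite_listset)
  finally show ?thesis .
qed

lemma sum_list_le_length_mult:
  "\<forall>x\<in>set xs. x \<le> b \<Longrightarrow> sum_list xs \<le> length xs * (b::nat)"
  by (induction xs) auto

lemma length_le_sum_list:
  "\<forall>x\<in>set xs. 1 \<le> x \<Longrightarrow> length xs \<le> sum_list (xs::nat list)"
  by (induction xs) auto

lemma sum_list_le_double_pred:
  "\<forall>l::nat\<in>set ls. 2 \<le> l \<Longrightarrow> sum_list ls \<le> 2 * sum_list (map (\<lambda>l. l - 1) ls)"
  by (induction ls) auto

lemma length_le_sum_list_pred: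
  "\<forall>l\<in>set ls. 2 \<le> l \<Longrightarrow> length ls \<le> sum_list (map (\<lambda>l. l - 1) ls)"
  by (induction ls) auto

lemma prod_list_map_power: "prod_list (map (\<lambda>j. c ^ j) xs) = (c::'b::comm_monoid_mult) ^ sum_list xs"
  by (induction xs) (auto simp: power_add)

lemma sum_lessThan_shift:
  fixes g :: "nat \<Rightarrow> 'b::comm_monoid_add"
  assumes "s + B \<le> B'" "\<forall>i\<ge>B. g i = 0"
  shows "(\<Sum>q<B'. if s \<le> q then g (q - s) else 0) = (\<Sum>i<B. g i)"
proof -
  have "(\<Sum>q<B'. if s \<le> q then g (q - s) else 0) = (\<Sum>q\<in>{s..<B'}. g (q - s))"
    by (rule sum.mono_neutral_cong_right) auto
  also have "\<dots> = (\<Sum>i\<in>{0..<B' - s}. g i)"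
    using sum.shift_bounds_nat_ivl[of "\<lambda>i. g (i - s)" 0 s "B' - s"] assms(1) by simp
  also have "\<dots> = (\<Sum>i<B. g i)"
    using assms by (intro sum.mono_neutral_cong_right) auto
  finally show ?thesis .
qed

definition remove_at :: "nat \<Rightarrow> 'b list \<Rightarrow> 'b list" where
  "remove_at i xs = take i xs @ drop (Suc i) xs"

definition insert_at :: "nat \<Rightarrow> 'b \<Rightarrow> 'b list \<Rightarrow> 'b list" where
  "insert_at i x xs = take i xs @ x # drop i xs"

lemma length_remove_at: "i < length xs \<Longrightarrow> length (remove_at i xs) = length xs - 1"
  by (simp add: remove_at_def)

lemma remove_at_insert_at: "i \<le> length xs \<Longrightarrow> remove_at i (insert_at i x xs) = xs"
  by (simp add: remove_at_def insert_at_def)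

lemma insert_at_remove_at: "i < length xs \<Longrightarrow> insert_at i (xs ! i) (remove_at i xs) = xs"
  by (simp add: remove_at_def insert_at_def id_take_nth_drop[symmetric])

lemma mset_remove_at: "i < length xs \<Longrightarrow> mset xs = add_mset (xs ! i) (mset (remove_at i xs))"
  unfolding remove_at_def by (subst (1) id_take_nth_drop[of i xs]) auto

lemma sum_list_remove_at:
  "i < length xs \<Longrightarrow> sum_list (xs::nat list) = sum_list (remove_at i xs) + xs ! i"
  unfolding remove_at_def by (subst (1) id_take_nth_drop[of i xs]) (auto simp: add_ac)

lemma nth_remove_at:
  "k < length xs - 1 \<Longrightarrow> remove_at i xs ! k = xs ! (if k < i then k else Suc k)"
  by (auto simp: remove_at_def nth_append min_def)

lemma in_set_remove_at:
  assumes "i < length xs"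
  shows "x \<in> set (remove_at i xs) \<longleftrightarrow> (\<exists>j<length xs. j \<noteq> i \<and> xs ! j = x)"
proof
  assume "x \<in> set (remove_at i xs)"
  then obtain k where "k < length xs - 1" "remove_at i xs ! k = x"
    using assms by (auto simp: in_set_conv_nth length_remove_at)
  then show "\<exists>j<length xs. j \<noteq> i \<and> xs ! j = x"
    by (intro exI[of _ "if k < i then k else Suc k"]) (auto simp: nth_remove_at)
next
  assume "\<exists>j<length xs. j \<noteq> i \<and> xs ! j = x"
  then obtain j where j: "j < length xs" "j \<noteq> i" "xs ! j = x" by blast
  define k where "k = (if j < i then j else j - 1)"
  have "k < length xs - 1" "remove_at i xs ! k = x"
    using j assms by (auto simp: k_def nth_remove_at)
  then show "x \<in> set (remove_at i xs)"
    using assms by (metis in_set_conv_nth length_remove_at)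
qed

context vector_space
begin

lemma sum_powers_scale_diff:
  fixes C :: "nat \<Rightarrow> 'b"
  shows "(\<Sum>q<Suc n. c ^ q *s C q) = (\<Sum>q<Suc n. c0 ^ q *s C q) +
     (c - c0) *s (\<Sum>k<n. c ^ k *s (\<Sum>j\<in>{Suc k..n}. c0 ^ (j - Suc k) *s C j))"
proof -
  have "(\<Sum>q<Suc n. c ^ q *s C q) - (\<Sum>q<Suc n. c0 ^ q *s C q) = (\<Sum>q\<le>n. (c ^ q - c0 ^ q) *s C q)"
    by (simp add: sum_subtractf[symmetric] scale_left_diff_distrib lessThan_Suc_atMost)
  also have "\<dots> = (\<Sum>q\<le>n. ((c - c0) * (\<Sum>i<q. c0 ^ (q - Suc i) * c ^ i)) *s C q)"
    by (simp add: power_diff_sumr2)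
  also have "\<dots> = (c - c0) *s (\<Sum>q\<le>n. \<Sum>i<q. (c ^ i * c0 ^ (q - Suc i)) *s C q)"
    unfolding scale_sum_right
    by (intro sum.cong refl) (simp add: scale_sum_left sum_distrib_left scale_sum_right mult_ac)
  also have "(\<Sum>q\<le>n. \<Sum>i<q. (c ^ i * c0 ^ (q - Suc i)) *s C q) =
      (\<Sum>i<n. \<Sum>q\<in>{Suc i..n}. (c ^ i * c0 ^ (q - Suc i)) *s C q)"
    by (rule sum.nested_swap')
  also have "\<dots> = (\<Sum>k<n. c ^ k *s (\<Sum>j\<in>{Suc k..n}. c0 ^ (j - Suc k) *s C j))"
    by (simp add: scale_sum_right)
  finally show ?thesis by (simp add: algebra_simps)
qed

lemma poly_coeffs_eq_0_cofinite:
  fixes C :: "nat \<Rightarrow> 'b"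
  assumes "infinite (UNIV :: 'a set)" "finite F"
    and "\<And>c. c \<notin> F \<Longrightarrow> (\<Sum>q<n. c ^ q *s C q) = 0" "q < n"
  shows "C q = 0"
  using assms(2-)
proof (induction n arbitrary: C F q)
  case 0 then show ?case by simp
next
  case (Suc n)
  obtain c0 :: 'a where c0: "c0 \<notin> F"
    using ex_new_if_finite[OF assms(1) Suc.prems(1)] by blast
  define Q where "Q k = (\<Sum>j\<in>{Suc k..n}. c0 ^ (j - Suc k) *s C j)" for k
  have p0: "(\<Sum>q<Suc n. c0 ^ q *s C q) = 0" using Suc.prems(2) c0 .
  \<comment> \<open>dividing out the root c0 leaves a polynomial of lower degree vanishing off F \<union> {c0}\<close>
  have "(\<Sum>k<n. c ^ k *s Q k) = 0" if c: "c \<notin> F \<union> {c0}" for c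
  proof -
    have "(c - c0) *s (\<Sum>k<n. c ^ k *s Q k) = 0"
      using sum_powers_scale_diff[of c C n c0] Suc.prems(2)[of c] c p0 by (simp add: Q_def)
    then show ?thesis using c by simp
  qed
  then have Q0: "Q k = 0" if "k < n" for k
    using Suc.IH[of "F \<union> {c0}" Q k] Suc.prems(1) that by blast
  have Cn: "C n = 0"
  proof (cases n)
    case 0 then show ?thesis using p0 by simp
  next
    case (Suc n')
    then show ?thesis using Q0[of n'] by (simp add: Q_def)
  qed
  have "C q = 0" if "q < n" for q
    using Suc.IH[of F C q] Suc.prems(1,2) Cn that by simp
  then show ?case using Cn Suc.prems(3) less_Suc_eq by auto
qed

lemma poly_coeffs_eq_0:
  fixes C :: "nat \<Rightarrow> 'b"
  assumes "infinite (UNIV :: 'a set)" "\<And>c. (\<Sum>q<n. c ^ q *s C q) = 0" "q < n"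
  shows "C q = 0"
  using poly_coeffs_eq_0_cofinite[where F="{}"] assms by blast

end

locale multilinear_algebra = vector_space scale
  for scale :: "'k::field_char_0 \<Rightarrow> 'a::ab_group_add \<Rightarrow> 'a" (infixr "*s" 75) +
  fixes m :: nat and Psi :: "nat \<Rightarrow> 'a list \<Rightarrow> 'a"
  assumes multilinear: "l \<in> {2..m} \<Longrightarrow> multilinear_op scale l (Psi l)"
    and symmetric: "l \<in> {2..m} \<Longrightarrow> symmetric_op l (Psi l)"
begin

lemma Psi_slot_linear:
  assumes "l \<in> {2..m}" "length ps + Suc (length r) = l"
  shows "Psi l (ps @ (c *s u + v) # r) = c *s Psi l (ps @ u # r) + Psi l (ps @ v # r)"
proof -
  have lin: "\<forall>xs i u v c. length xs = l \<and> i < l \<longrightarrow>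
      Psi l (xs[i := c *s u + v]) = c *s Psi l (xs[i := u]) + Psi l (xs[i := v])"
    using multilinear[OF assms(1)] unfolding multilinear_op_def by blast
  then have "Psi l ((ps @ u # r)[length ps := c *s u + v]) =
     c *s Psi l ((ps @ u # r)[length ps := u]) + Psi l ((ps @ u # r)[length ps := v])"
    using assms(2) by (intro lin[rule_format]) auto
  then show ?thesis by (simp add: list_update_append)
qed

lemma Psi_slot_zero:
  assumes "l \<in> {2..m}" "length ps + Suc (length r) = l"
  shows "Psi l (ps @ 0 # r) = 0"
  using Psi_slot_linear[OF assms, of 1 0 0] by simp

lemma Psi_slot_scale:
  assumes "l \<in> {2..m}" "length ps + Suc (length r) = l"
  shows "Psi l (ps @ (c *s u) # r) = c *s Psi l (ps @ u # r)"
  using Psi_slot_linear[OF assms, of c u 0] Psi_slot_zero[OF assms] by simp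

lemma Psi_slot_sum:
  assumes "l \<in> {2..m}" "length ps + Suc (length r) = l"
  shows "Psi l (ps @ (\<Sum>i\<in>S. g i) # r) = (\<Sum>i\<in>S. Psi l (ps @ g i # r))"
proof (induction S rule: infinite_finite_induct)
  case (insert x F)
  then show ?case using Psi_slot_linear[OF assms, of 1] by simp
qed (simp_all add: Psi_slot_zero[OF assms])

lemma Psi_sum_expand:
  assumes "l \<in> {2..m}" "length ps + length SGs = l" "\<forall>(S, g)\<in>set SGs. finite S"
  shows "Psi l (ps @ map (\<lambda>(S, g). sum g S) SGs) =
     (\<Sum>is\<in>listset (map fst SGs). Psi l (ps @ map (\<lambda>((S, g), i). g i) (zip SGs is)))"
  using assms(2,3)
proof (induction SGs arbitrary: ps)
  case (Cons Sg SGs)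
  obtain S g where Sg: "Sg = (S, g)" by fastforce
  have fin: "finite S" "\<forall>A\<in>set (map fst SGs). finite A" using Cons.prems by (auto simp: Sg)
  let ?rest = "map (\<lambda>(S, g). sum g S) SGs"
  have "Psi l (ps @ map (\<lambda>(S, g). sum g S) (Sg # SGs)) = (\<Sum>i\<in>S. Psi l ((ps @ [g i]) @ ?rest))"
    using Psi_slot_sum[OF assms(1), of ps ?rest g S] Cons.prems by (simp add: Sg)
  also have "\<dots> = (\<Sum>i\<in>S. \<Sum>is\<in>listset (map fst SGs).
        Psi l ((ps @ [g i]) @ map (\<lambda>((S, g), i). g i) (zip SGs is)))"
    using Cons by (intro sum.cong refl Cons.IH) auto
  also have "\<dots> = (\<Sum>is\<in>listset (map fst (Sg # SGs)). Psi l (ps @ map (\<lambda>((S, g), i). g i) (zip (Sg # SGs) is)))"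
    by (simp add: Sg sum_listset_Cons[OF fin] del: listset.simps(2))
  finally show ?case .
qed simp

lemma Psi_scale_slots:
  assumes "l \<in> {2..m}" "length ps + length cxs = l"
  shows "Psi l (ps @ map (\<lambda>(c, x). c *s x) cxs) = prod_list (map fst cxs) *s Psi l (ps @ map snd cxs)"
  using assms(2)
proof (induction cxs arbitrary: ps)
  case (Cons p cxs)
  obtain c x where p: "p = (c, x)" by fastforce
  have "Psi l (ps @ map (\<lambda>(c, x). c *s x) (p # cxs)) = Psi l ((ps @ [c *s x]) @ map (\<lambda>(c, x). c *s x) cxs)"
    by (simp add: p)
  also have "\<dots> = prod_list (map fst cxs) *s Psi l ((ps @ [c *s x]) @ map snd cxs)"
    using Cons by (intro Cons.IH) auto
  also have "\<dots> = prod_list (map fst (p # cxs)) *s Psi l (ps @ map snd (p # cxs))"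
    using Psi_slot_scale[OF assms(1), of ps "map snd cxs" c x] Cons.prems by (simp add: p mult.commute)
  finally show ?case .
qed simp

lemma Psi_head_zero: "l \<in> {2..m} \<Longrightarrow> length r = l - 1 \<Longrightarrow> Psi l (0 # r) = 0"
  using Psi_slot_zero[of l "[]" r] by simp

lemma Psi_head_add:
  "l \<in> {2..m} \<Longrightarrow> length r = l - 1 \<Longrightarrow> Psi l ((x + y) # r) = Psi l (x # r) + Psi l (y # r)"
  using Psi_slot_linear[of l "[]" r 1 x y] by simp

lemma Psi_head_scale: "l \<in> {2..m} \<Longrightarrow> length r = l - 1 \<Longrightarrow> Psi l ((c *s x) # r) = c *s Psi l (x # r)"
  using Psi_slot_scale[of l "[]" r c x] by simp

lemma Psi_scale_powers:
  assumes "l \<in> {2..m}" "length \<sigma> = l - 1"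
  shows "Psi l ((c ^ i *s x) # map (\<lambda>j. c ^ j *s f j) \<sigma>) = c ^ (i + sum_list \<sigma>) *s Psi l (x # map f \<sigma>)"
proof -
  have "Psi l ([] @ map (\<lambda>(c, x). c *s x) ((c ^ i, x) # map (\<lambda>j. (c ^ j, f j)) \<sigma>)) =
     prod_list (map fst ((c ^ i, x) # map (\<lambda>j. (c ^ j, f j)) \<sigma>)) *s
       Psi l ([] @ map snd ((c ^ i, x) # map (\<lambda>j. (c ^ j, f j)) \<sigma>))"
    using assms by (intro Psi_scale_slots) auto
  then show ?thesis by (simp add: comp_def prod_list_map_power power_add)
qed

lemma Psi_head_sum:
  "l \<in> {2..m} \<Longrightarrow> length r = l - 1 \<Longrightarrow> Psi l ((\<Sum>i\<in>S. g i) # r) = (\<Sum>i\<in>S. Psi l (g i # r))"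
  using Psi_slot_sum[of l "[]" r g S] by simp

end

lemma nth_less_sum_list:
  assumes "2 \<le> length ds" "\<forall>d\<in>set ds. 1 \<le> d" "i < length ds"
  shows "ds ! i < sum_list (ds::nat list)"
proof -
  have "\<forall>d\<in>set (remove_at i ds). 1 \<le> d" using assms(2,3) by (force simp: in_set_remove_at)
  then have "length (remove_at i ds) \<le> sum_list (remove_at i ds)" by (rule length_le_sum_list)
  then show ?thesis using assms(1,3) sum_list_remove_at[of i ds] length_remove_at[of i ds] by linarith
qed

lemma deg_V [simp]: "deg (V i) = 1"
  by (simp add: deg_def)

lemma deg_Op: "deg (Op ts) = sum_list (map deg ts)"
  unfolding deg_def by (simp add: length_concat comp_def)

lemma deg_ge_1: "wf_tm m t \<Longrightarrow> 1 \<le> deg t"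
proof (induction t)
  case (Op ts)
  then obtain t ts' where ts: "ts = t # ts'" by (cases ts) auto
  have "1 \<le> deg t" using Op ts by auto
  then show ?case by (simp add: deg_Op ts)
qed simp

lemma Op_in_terms_deg_iff:
  "Op ts \<in> terms_deg m q \<longleftrightarrow> 2 \<le> length ts \<and> length ts \<le> m \<and>
     (\<forall>t\<in>set ts. t \<in> terms_deg m (deg t)) \<and> sum_list (map deg ts) = q"
  by (auto simp: terms_deg_def deg_Op)

lemma degs_of_Op_in_terms_deg:
  assumes "Op ts \<in> terms_deg m q"
  shows "\<forall>d\<in>set (map deg ts). 1 \<le> d \<and> d < q"
proof -
  have "\<forall>d\<in>set (map deg ts). 1 \<le> d"
    using assms deg_ge_1 by (auto simp: Op_in_terms_deg_iff terms_deg_def)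
  moreover have "d < q" if "d \<in> set (map deg ts)" for d
    using that nth_less_sum_list[of "map deg ts"] \<open>\<forall>d\<in>set (map deg ts). 1 \<le> d\<close> assms
    by (auto simp: Op_in_terms_deg_iff in_set_conv_nth)
  ultimately show ?thesis by blast
qed

definition compositions :: "nat \<Rightarrow> nat \<Rightarrow> nat list set" where
  "compositions l q = {ds. length ds = l \<and> set ds \<subseteq> {1..q} \<and> sum_list ds = q}"

lemma finite_compositions: "finite (compositions l q)"
proof (rule finite_subset)
  show "compositions l q \<subseteq> {xs. set xs \<subseteq> {1..q} \<and> length xs = l}"
    by (auto simp: compositions_def)
qed (rule finite_lists_length_eq, simp)

lemma finite_terms_deg: "finite (terms_deg m q)"
proof (induction q rule: less_induct)
  case (less q)
  let ?D = "{ds. set ds \<subseteq> {..<q} \<and> length ds \<le> m}"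
  have "terms_deg m q \<subseteq> {V 0} \<union> Op ` (\<Union>ds\<in>?D. listset (map (terms_deg m) ds))"
  proof
    fix t assume t: "t \<in> terms_deg m q"
    show "t \<in> {V 0} \<union> Op ` (\<Union>ds\<in>?D. listset (map (terms_deg m) ds))"
    proof (cases t)
      case (V i)
      then show ?thesis using t by (auto simp: terms_deg_def)
    next
      case (Op ts)
      then have "map deg ts \<in> ?D" "ts \<in> listset (map (terms_deg m) (map deg ts))"
        using t degs_of_Op_in_terms_deg[of ts m q]
        by (auto simp: Op_in_terms_deg_iff in_listset_iff list_all2_conv_all_nth)
      then show ?thesis using Op by blast
    qed
  qed
  moreover have "finite (\<Union>ds\<in>?D. listset (map (terms_deg m) ds))"
  proof (rule finite_UN_I)
    show "finite ?D" using finite_lists_length_le[of "{..<q}" m] by (simp add: conj_commute)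
    fix ds assume "ds \<in> ?D"
    then show "finite (listset (map (terms_deg m) ds))" using less by (intro finite_listset) auto
  qed
  ultimately show ?case by (simp add: finite_subset)
qed

lemma terms_deg_Op_listset:
  assumes "ds \<in> compositions l q" "l \<in> {2..m}"
  shows "{ts. Op ts \<in> terms_deg m q \<and> (length ts, map deg ts) = (l, ds)} = listset (map (terms_deg m) ds)"
proof (intro set_eqI iffI)
  fix ts assume "ts \<in> {ts. Op ts \<in> terms_deg m q \<and> (length ts, map deg ts) = (l, ds)}"
  then have "\<forall>t\<in>set ts. t \<in> terms_deg m (deg t)" "map deg ts = ds"
    by (auto simp: Op_in_terms_deg_iff)
  then show "ts \<in> listset (map (terms_deg m) ds)"
    by (auto simp: in_listset_iff list_all2_conv_all_nth)
next
  fix ts assume "ts \<in> listset (map (terms_deg m) ds)"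
  then have len: "length ts = length ds" and nth: "\<And>k. k < length ds \<Longrightarrow> ts ! k \<in> terms_deg m (ds ! k)"
    by (auto simp: in_listset_iff list_all2_conv_all_nth)
  have degs: "map deg ts = ds" using len nth by (intro nth_equalityI) (auto simp: terms_deg_def)
  have "\<forall>t\<in>set ts. t \<in> terms_deg m (deg t)"
    using len nth degs by (auto simp: in_set_conv_nth)
  then show "ts \<in> {ts. Op ts \<in> terms_deg m q \<and> (length ts, map deg ts) = (l, ds)}"
    using assms len degs by (auto simp: Op_in_terms_deg_iff compositions_def)
qed

lemma map_zip_const_fun:
  "length ts = length ds \<Longrightarrow> map (\<lambda>((S, g), i). g i) (zip (map (\<lambda>d. (A d, F)) ds) ts) = map F ts"
  by (induction ds arbitrary: ts) (auto simp: length_Suc_conv)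

context multilinear_algebra
begin

lemma sum_terms_of_shape:
  assumes l: "l \<in> {2..m}" and ds: "ds \<in> compositions l q"
  shows "(\<Sum>ts\<in>{ts. Op ts \<in> terms_deg m q \<and> (length ts, map deg ts) = (l, ds)}. eval_tm Psi \<rho> (Op ts)) =
    Psi l (map (\<lambda>d. \<Sum>t\<in>terms_deg m d. eval_tm Psi \<rho> t) ds)"
proof -
  let ?ev = "eval_tm Psi \<rho>"
  let ?SGs = "map (\<lambda>d. (terms_deg m d, ?ev)) ds"
  have len: "length ds = l" using ds by (simp add: compositions_def)
  have "(\<Sum>ts\<in>{ts. Op ts \<in> terms_deg m q \<and> (length ts, map deg ts) = (l, ds)}. ?ev (Op ts)) =
      (\<Sum>ts\<in>listset (map fst ?SGs). Psi l ([] @ map (\<lambda>((S, g), i). g i) (zip ?SGs ts)))"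
    unfolding terms_deg_Op_listset[OF ds l]
    by (auto intro!: sum.cong simp: map_zip_const_fun comp_def in_listset_iff list_all2_conv_all_nth len)
  also have "\<dots> = Psi l ([] @ map (\<lambda>(S, g). sum g S) ?SGs)"
    using l len by (intro Psi_sum_expand[symmetric]) (auto simp: finite_terms_deg)
  finally show ?thesis by (simp add: comp_def)
qed

lemma yagzhev_sum_recursion:
  assumes "2 \<le> q"
  shows "(\<Sum>t\<in>terms_deg m q. eval_tm Psi \<rho> t) =
    (\<Sum>l\<in>{2..m}. \<Sum>ds\<in>compositions l q. Psi l (map (\<lambda>d. \<Sum>t\<in>terms_deg m d. eval_tm Psi \<rho> t) ds))"
proof -
  let ?TS = "{ts. Op ts \<in> terms_deg m q}"
  let ?ev = "eval_tm Psi \<rho>"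
  let ?shape = "\<lambda>ts. (length ts, map deg ts)"
  have terms: "terms_deg m q = Op ` ?TS"
  proof (intro set_eqI iffI)
    fix t assume "t \<in> terms_deg m q"
    then show "t \<in> Op ` ?TS" using assms by (cases t) (auto simp: terms_deg_def)
  qed blast
  have "finite (Op ` ?TS)"
    using finite_terms_deg[of m q] by (subst (asm) terms)
  then have fin: "finite ?TS" by (rule finite_imageD) (simp add: inj_on_def)
  have shapes: "?shape ` ?TS \<subseteq> Sigma {2..m} (\<lambda>l. compositions l q)"
  proof
    fix p assume "p \<in> ?shape ` ?TS"
    then obtain ts where ts: "Op ts \<in> terms_deg m q" and p: "p = ?shape ts" by auto
    then show "p \<in> Sigma {2..m} (\<lambda>l. compositions l q)"
      using degs_of_Op_in_terms_deg[OF ts] by (auto simp: Op_in_terms_deg_iff compositions_def)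
  qed
  have "(\<Sum>t\<in>terms_deg m q. ?ev t) = (\<Sum>t\<in>Op ` ?TS. ?ev t)"
    using terms by (rule arg_cong)
  also have "\<dots> = (\<Sum>ts\<in>?TS. ?ev (Op ts))"
    by (rule sum.reindex[unfolded comp_def]) (simp add: inj_on_def)
  also have "\<dots> = (\<Sum>p\<in>Sigma {2..m} (\<lambda>l. compositions l q). \<Sum>ts\<in>{ts \<in> ?TS. ?shape ts = p}. ?ev (Op ts))"
    by (rule sum.group[symmetric, OF fin _ shapes]) (auto intro: finite_compositions)
  also have "\<dots> = (\<Sum>p\<in>Sigma {2..m} (\<lambda>l. compositions l q).
      Psi (fst p) (map (\<lambda>d. \<Sum>t\<in>terms_deg m d. ?ev t) (snd p)))"
    using sum_terms_of_shape by (intro sum.cong refl) (auto simp: Collect_conj_eq[symmetric])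
  also have "\<dots> = (\<Sum>l\<in>{2..m}. \<Sum>ds\<in>compositions l q. Psi l (map (\<lambda>d. \<Sum>t\<in>terms_deg m d. ?ev t) ds))"
    by (subst sum.Sigma) (auto intro: finite_compositions simp: case_prod_unfold)
  finally show ?thesis .
qed

end

definition small_seqs :: "nat \<Rightarrow> nat \<Rightarrow> nat list set" where
  "small_seqs q0 k = {\<sigma>. length \<sigma> = k \<and> set \<sigma> \<subseteq> {1..<q0}}"

lemma small_seqs_listset: "small_seqs q0 k = listset (replicate k {1..<q0})"
  by (simp add: small_seqs_def listset_replicate)

lemma finite_small_seqs: "finite (small_seqs q0 k)"
  unfolding small_seqs_listset by (rule finite_listset) auto

lemma length_small_seqs: "\<sigma> \<in> small_seqs q0 k \<Longrightarrow> length \<sigma> = k"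
  by (simp add: small_seqs_def)

lemma sum_list_small_seqs_le: "\<sigma> \<in> small_seqs q0 k \<Longrightarrow> sum_list \<sigma> \<le> k * q0"
  using sum_list_le_length_mult[of \<sigma> q0] by (force simp: small_seqs_def)

lemma sum_list_small_seqs_ge: "\<sigma> \<in> small_seqs q0 k \<Longrightarrow> k \<le> sum_list \<sigma>"
  using length_le_sum_list[of \<sigma>] by (force simp: small_seqs_def)

definition engel_seqs0 :: "nat \<Rightarrow> nat \<Rightarrow> nat list set" where
  "engel_seqs0 m s = {ls. (\<forall>l\<in>set ls. l \<in> {2..m}) \<and> sum_list (map (\<lambda>l. l - 1) ls) = s}"

lemma engel_seqs0_0: "engel_seqs0 m 0 = {[]}"
proof -
  have "ls = []" if "\<forall>l\<in>set ls. l \<in> {2..m}" "sum_list (map (\<lambda>l. l - 1) ls) = 0" for ls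
    using that by (cases ls) auto
  then show ?thesis by (auto simp: engel_seqs0_def)
qed

lemma engel_seqs0_pos: "0 < s \<Longrightarrow> engel_seqs0 m s = engel_seqs m s"
  by (auto simp: engel_seqs0_def engel_seqs_def)

lemma finite_engel_seqs0: "finite (engel_seqs0 m s)"
proof (rule finite_subset)
  show "engel_seqs0 m s \<subseteq> {ls. set ls \<subseteq> {..m} \<and> length ls \<le> s}"
    using length_le_sum_list_pred by (fastforce simp: engel_seqs0_def)
qed (rule finite_lists_length_le, simp)

lemma engel_seqs0_hd:
  assumes "l \<in> {2..m}"
  shows "{ls \<in> engel_seqs0 m s. ls \<noteq> [] \<and> hd ls = l} =
    (if l - 1 \<le> s then Cons l ` engel_seqs0 m (s - (l - 1)) else {})"
proof (cases "l - 1 \<le> s")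
  case True
  show ?thesis
  proof (simp only: True if_True, intro set_eqI iffI)
    fix ls assume "ls \<in> {ls \<in> engel_seqs0 m s. ls \<noteq> [] \<and> hd ls = l}"
    then obtain ls' where "ls = l # ls'" "ls \<in> engel_seqs0 m s" by (cases ls) auto
    then show "ls \<in> Cons l ` engel_seqs0 m (s - (l - 1))" by (auto simp: engel_seqs0_def)
  next
    fix ls assume "ls \<in> Cons l ` engel_seqs0 m (s - (l - 1))"
    then show "ls \<in> {ls \<in> engel_seqs0 m s. ls \<noteq> [] \<and> hd ls = l}"
      using assms True by (auto simp: engel_seqs0_def)
  qed
next
  case False
  have "l # ls' \<notin> engel_seqs0 m s" for ls'
    using False by (auto simp: engel_seqs0_def)
  then show ?thesis using False by (auto simp: neq_Nil_conv)
qed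

context multilinear_algebra
begin

text \<open>graded_Ad f q0 l h q is the degree-q part of Ad_(l-1)(x) applied to the sum of the h i,
  where x is the sum of the f j for 0 < j < q0 and f j, h i are taken to have degree j, i.
  Ad_low_part_expansion makes this precise: scaling the degree-i part by c^i, the graded
  operators are the coefficients of the resulting polynomial in c.\<close>

definition graded_Ad :: "(nat \<Rightarrow> 'a) \<Rightarrow> nat \<Rightarrow> nat \<Rightarrow> (nat \<Rightarrow> 'a) \<Rightarrow> nat \<Rightarrow> 'a" where
  "graded_Ad f q0 l h q = (\<Sum>\<sigma>\<in>small_seqs q0 (l - 1).
      if sum_list \<sigma> \<le> q then Psi l (h (q - sum_list \<sigma>) # map f \<sigma>) else 0)"

fun graded_Ad_chain :: "(nat \<Rightarrow> 'a) \<Rightarrow> nat \<Rightarrow> nat list \<Rightarrow> (nat \<Rightarrow> 'a) \<Rightarrow> nat \<Rightarrow> 'a" where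
  "graded_Ad_chain f q0 [] h = h"
| "graded_Ad_chain f q0 (l # ls) h = graded_Ad f q0 l (graded_Ad_chain f q0 ls h)"

definition low_part :: "(nat \<Rightarrow> 'a) \<Rightarrow> nat \<Rightarrow> 'k \<Rightarrow> 'a" where
  "low_part f q0 c = (\<Sum>j\<in>{1..<q0}. c ^ j *s f j)"

lemma graded_Ad_support:
  assumes "l \<in> {2..m}" "\<forall>i\<ge>B. h i = 0" "B + l * q0 \<le> q"
  shows "graded_Ad f q0 l h q = 0"
  unfolding graded_Ad_def
proof (rule sum.neutral, intro ballI)
  fix \<sigma> assume \<sigma>: "\<sigma> \<in> small_seqs q0 (l - 1)"
  have "sum_list \<sigma> \<le> l * q0"
    using sum_list_small_seqs_le[OF \<sigma>] by (meson diff_le_self le_trans mult_le_mono1)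
  then have "h (q - sum_list \<sigma>) = 0" using assms(2,3) by auto
  then show "(if sum_list \<sigma> \<le> q then Psi l (h (q - sum_list \<sigma>) # map f \<sigma>) else 0) = 0"
    using Psi_head_zero[OF assms(1)] \<sigma> by (simp add: length_small_seqs)
qed

lemma graded_Ad_chain_support:
  assumes "\<forall>l\<in>set ls. l \<in> {2..m}" "\<forall>i\<ge>B. h i = 0" "B + sum_list ls * q0 \<le> q"
  shows "graded_Ad_chain f q0 ls h q = 0"
  using assms
proof (induction ls arbitrary: q)
  case (Cons l ls)
  have "\<forall>i\<ge>B + sum_list ls * q0. graded_Ad_chain f q0 ls h i = 0" using Cons by auto
  then show ?case using Cons.prems
    by (simp, intro graded_Ad_support[where B="B + sum_list ls * q0"]) (auto simp: algebra_simps)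
qed simp

lemma Ad_low_part_expansion:
  assumes l: "l \<in> {2..m}" and h: "\<forall>i\<ge>B. h i = 0" and B': "B + l * q0 \<le> B'"
  shows "Ad Psi l (low_part f q0 c) (\<Sum>i<B. c ^ i *s h i) = (\<Sum>q<B'. c ^ q *s graded_Ad f q0 l h q)"
proof -
  define SGs where "SGs = ({..<B}, \<lambda>i. c ^ i *s h i) # replicate (l - 1) ({1..<q0}, \<lambda>j. c ^ j *s f j)"
  have l1: "Suc (l - 1) = l" using l by simp
  have "Ad Psi l (low_part f q0 c) (\<Sum>i<B. c ^ i *s h i) = Psi l ([] @ map (\<lambda>(S, g). sum g S) SGs)"
    by (simp add: Ad_def SGs_def low_part_def)
  also have "\<dots> = (\<Sum>is\<in>listset (map fst SGs). Psi l ([] @ map (\<lambda>((S, g), i). g i) (zip SGs is)))"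
    using l l1 by (intro Psi_sum_expand) (auto simp: SGs_def)
  also have "\<dots> = (\<Sum>i<B. \<Sum>\<sigma>\<in>small_seqs q0 (l - 1). Psi l ([] @ map (\<lambda>((S, g), i). g i) (zip SGs (i # \<sigma>))))"
    unfolding SGs_def
    by (simp add: sum_listset_Cons small_seqs_listset finite_listset del: listset.simps(2))
  also have "\<dots> = (\<Sum>i<B. \<Sum>\<sigma>\<in>small_seqs q0 (l - 1). Psi l ((c ^ i *s h i) # map (\<lambda>j. c ^ j *s f j) \<sigma>))"
    by (intro sum.cong refl) (auto simp: SGs_def small_seqs_def zip_replicate1 comp_def)
  also have "\<dots> = (\<Sum>i<B. \<Sum>\<sigma>\<in>small_seqs q0 (l - 1). c ^ (i + sum_list \<sigma>) *s Psi l (h i # map f \<sigma>))"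
    using Psi_scale_powers[OF l] by (intro sum.cong refl) (simp add: length_small_seqs)
  also have "\<dots> = (\<Sum>\<sigma>\<in>small_seqs q0 (l - 1). \<Sum>i<B. c ^ (i + sum_list \<sigma>) *s Psi l (h i # map f \<sigma>))"
    by (rule sum.swap)
  also have "\<dots> = (\<Sum>\<sigma>\<in>small_seqs q0 (l - 1). \<Sum>q<B'. if sum_list \<sigma> \<le> q then
        c ^ (q - sum_list \<sigma> + sum_list \<sigma>) *s Psi l (h (q - sum_list \<sigma>) # map f \<sigma>) else 0)"
  proof (rule sum.cong[OF refl])
    fix \<sigma> assume \<sigma>: "\<sigma> \<in> small_seqs q0 (l - 1)"
    have "sum_list \<sigma> \<le> l * q0"
      using sum_list_small_seqs_le[OF \<sigma>] by (meson diff_le_self le_trans mult_le_mono1)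
    then have shift: "sum_list \<sigma> + B \<le> B'" using B' by linarith
    have vanish: "\<forall>i\<ge>B. c ^ (i + sum_list \<sigma>) *s Psi l (h i # map f \<sigma>) = 0"
      using h Psi_head_zero[OF l] \<sigma> by (simp add: length_small_seqs)
    show "(\<Sum>i<B. c ^ (i + sum_list \<sigma>) *s Psi l (h i # map f \<sigma>)) = (\<Sum>q<B'. if sum_list \<sigma> \<le> q then
        c ^ (q - sum_list \<sigma> + sum_list \<sigma>) *s Psi l (h (q - sum_list \<sigma>) # map f \<sigma>) else 0)"
      using sum_lessThan_shift[OF shift vanish] by (simp cong: if_cong)
  qed
  also have "\<dots> = (\<Sum>q<B'. c ^ q *s graded_Ad f q0 l h q)"
    unfolding graded_Ad_def scale_sum_right
    by (subst sum.swap) (auto intro!: sum.cong)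
  finally show ?thesis .
qed

lemma Ad_chain_low_part_expansion:
  assumes "\<forall>l\<in>set ls. l \<in> {2..m}" "\<forall>i\<ge>B. h i = 0" "B + sum_list ls * q0 \<le> B'"
  shows "foldr (\<lambda>l g. Ad Psi l (low_part f q0 c) \<circ> g) ls id (\<Sum>i<B. c ^ i *s h i)
       = (\<Sum>q<B'. c ^ q *s graded_Ad_chain f q0 ls h q)"
  using assms
proof (induction ls arbitrary: B')
  case Nil
  then show ?case by simp (intro sum.mono_neutral_cong_left, auto)
next
  case (Cons l ls)
  let ?B = "B + sum_list ls * q0"
  have IH: "foldr (\<lambda>l g. Ad Psi l (low_part f q0 c) \<circ> g) ls id (\<Sum>i<B. c ^ i *s h i)
      = (\<Sum>q<?B. c ^ q *s graded_Ad_chain f q0 ls h q)"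
    using Cons.prems by (intro Cons.IH) auto
  have "foldr (\<lambda>l g. Ad Psi l (low_part f q0 c) \<circ> g) (l # ls) id (\<Sum>i<B. c ^ i *s h i)
      = Ad Psi l (low_part f q0 c) (\<Sum>q<?B. c ^ q *s graded_Ad_chain f q0 ls h q)"
    by (simp only: foldr_Cons comp_apply IH)
  also have "\<dots> = (\<Sum>q<B'. c ^ q *s graded_Ad f q0 l (graded_Ad_chain f q0 ls h) q)"
    using Cons.prems graded_Ad_chain_support[of ls B h]
    by (intro Ad_low_part_expansion) (auto simp: algebra_simps)
  finally show ?case by (simp only: graded_Ad_chain.simps)
qed

lemma graded_Ad_add:
  "l \<in> {2..m} \<Longrightarrow> graded_Ad f q0 l (\<lambda>i. u i + v i) q = graded_Ad f q0 l u q + graded_Ad f q0 l v q"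
  unfolding graded_Ad_def sum.distrib[symmetric]
  by (intro sum.cong refl) (simp add: Psi_head_add length_small_seqs)

lemma graded_Ad_scale: "l \<in> {2..m} \<Longrightarrow> graded_Ad f q0 l (\<lambda>i. c *s h i) q = c *s graded_Ad f q0 l h q"
  unfolding graded_Ad_def scale_sum_right
  by (intro sum.cong refl) (simp add: Psi_head_scale length_small_seqs)

lemma graded_Ad_sum:
  "l \<in> {2..m} \<Longrightarrow> graded_Ad f q0 l (\<lambda>i. \<Sum>x\<in>S. g x i) q = (\<Sum>x\<in>S. graded_Ad f q0 l (g x) q)"
  unfolding graded_Ad_def
  by (subst sum.swap) (intro sum.cong refl, simp add: Psi_head_sum length_small_seqs)

lemma graded_Ad_cong_below:
  assumes "l \<in> {2..m}" "\<forall>i<q. h i = h' i"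
  shows "graded_Ad f q0 l h q = graded_Ad f q0 l h' q"
  unfolding graded_Ad_def
proof (intro sum.cong refl)
  fix \<sigma> assume \<sigma>: "\<sigma> \<in> small_seqs q0 (l - 1)"
  have "1 \<le> l - 1" using assms(1) by auto
  then have "1 \<le> sum_list \<sigma>" using sum_list_small_seqs_ge[OF \<sigma>] by linarith
  then show "(if sum_list \<sigma> \<le> q then Psi l (h (q - sum_list \<sigma>) # map f \<sigma>) else 0) =
    (if sum_list \<sigma> \<le> q then Psi l (h' (q - sum_list \<sigma>) # map f \<sigma>) else 0)"
    using assms(2) by auto
qed

lemma graded_Ad_zero: "l \<in> {2..m} \<Longrightarrow> graded_Ad f q0 l (\<lambda>i. 0) q = 0"
  unfolding graded_Ad_def by (intro sum.neutral) (simp add: Psi_head_zero length_small_seqs)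

definition graded_L :: "(nat \<Rightarrow> 'a) \<Rightarrow> nat \<Rightarrow> (nat \<Rightarrow> 'a) \<Rightarrow> nat \<Rightarrow> 'a" where
  "graded_L f q0 h q = (\<Sum>l\<in>{2..m}. of_nat l *s graded_Ad f q0 l h q)"

lemma graded_L_add: "graded_L f q0 (\<lambda>i. u i + v i) q = graded_L f q0 u q + graded_L f q0 v q"
  unfolding graded_L_def sum.distrib[symmetric]
  by (intro sum.cong refl) (simp add: graded_Ad_add scale_right_distrib)

lemma graded_L_cong_below: "\<forall>i<q. h i = h' i \<Longrightarrow> graded_L f q0 h q = graded_L f q0 h' q"
  unfolding graded_L_def by (intro sum.cong refl) (simp add: graded_Ad_cong_below[of _ q h h'])

lemma graded_L_zero_below: "\<forall>i<q. h i = 0 \<Longrightarrow> graded_L f q0 h q = 0"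
  using graded_L_cong_below[of q h "\<lambda>i. 0"] unfolding graded_L_def by (simp add: graded_Ad_zero)

lemma graded_L_support:
  assumes "\<forall>i\<ge>B. h i = 0" "B + m * q0 \<le> q"
  shows "graded_L f q0 h q = 0"
  unfolding graded_L_def
proof (intro sum.neutral ballI)
  fix l assume l: "l \<in> {2..m}"
  then have "l * q0 \<le> m * q0" by (intro mult_le_mono1) simp
  then have "B + l * q0 \<le> q" using assms(2) by linarith
  then show "of_nat l *s graded_Ad f q0 l h q = 0" using graded_Ad_support[OF l assms(1)] by simp
qed

lemma graded_L_fixpoint_unique:
  assumes "\<And>q. v q = w q + graded_L f q0 v q" "\<And>q. v' q = w q + graded_L f q0 v' q"
  shows "v q = v' q"
proof (induction q rule: less_induct)
  case (less q)
  then have "graded_L f q0 v q = graded_L f q0 v' q" by (intro graded_L_cong_below) auto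
  then show ?case using assms[of q] by simp
qed

definition graded_E :: "(nat \<Rightarrow> 'a) \<Rightarrow> nat \<Rightarrow> nat \<Rightarrow> (nat \<Rightarrow> 'a) \<Rightarrow> nat \<Rightarrow> 'a" where
  "graded_E f q0 s h q = (\<Sum>ls\<in>engel_seqs0 m s. of_nat (prod_list ls) *s graded_Ad_chain f q0 ls h q)"

lemma graded_E_0: "graded_E f q0 0 h q = h q"
  by (simp add: graded_E_def engel_seqs0_0)

lemma graded_E_support:
  assumes "\<forall>i\<ge>B. h i = 0" "B + 2 * s * q0 \<le> q"
  shows "graded_E f q0 s h q = 0"
  unfolding graded_E_def
proof (intro sum.neutral ballI)
  fix ls assume ls: "ls \<in> engel_seqs0 m s"
  then have valid_arities: "\<forall>l\<in>set ls. l \<in> {2..m}" by (simp add: engel_seqs0_def)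
  have "sum_list ls \<le> 2 * s" using sum_list_le_double_pred[of ls] ls by (auto simp: engel_seqs0_def)
  then have "B + sum_list ls * q0 \<le> q" using assms(2) mult_le_mono1[of "sum_list ls" "2 * s" q0] by linarith
  then show "of_nat (prod_list ls) *s graded_Ad_chain f q0 ls h q = 0"
    using graded_Ad_chain_support[OF valid_arities assms(1)] by simp
qed

text \<open>Comparing coefficients of c in E_s(low_part f q0 c) applied to a polynomial in c.\<close>

lemma graded_E_eq_0:
  assumes E: "\<And>x y. E_op scale m Psi s x y = 0" and "0 < s" and h: "\<forall>i\<ge>B. h i = 0"
  shows "graded_E f q0 s h q = 0"
proof -
  define B' where "B' = B + 2 * s * q0"
  define C where "C q = graded_E f q0 s h q" for q
  have valid_arities: "\<forall>l\<in>set ls. l \<in> {2..m}" and bound: "B + sum_list ls * q0 \<le> B'"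
    if "ls \<in> engel_seqs m s" for ls
    using that sum_list_le_double_pred[of ls] mult_le_mono1[of "sum_list ls" "2 * s" q0]
    by (auto simp: engel_seqs_def B'_def)
  have "(\<Sum>q<B'. c ^ q *s C q) = 0" for c
  proof -
    have "0 = E_op scale m Psi s (low_part f q0 c) (\<Sum>i<B. c ^ i *s h i)" using E by simp
    also have "\<dots> = (\<Sum>ls\<in>engel_seqs m s. of_nat (prod_list ls) *s (\<Sum>q<B'. c ^ q *s graded_Ad_chain f q0 ls h q))"
      unfolding E_op_def
      by (intro sum.cong refl) (simp add: Ad_chain_low_part_expansion[OF valid_arities h bound])
    also have "\<dots> = (\<Sum>q<B'. c ^ q *s C q)"
      unfolding C_def graded_E_def engel_seqs0_pos[OF \<open>0 < s\<close>] scale_sum_right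
      by (subst sum.swap) (simp add: mult.commute)
    finally show ?thesis by simp
  qed
  then have "C q = 0" if "q < B'"
    using poly_coeffs_eq_0[OF infinite_UNIV_char_0] that by blast
  moreover have "C q = 0" if "B' \<le> q"
    using graded_E_support[OF h] that by (simp add: C_def B'_def)
  ultimately show ?thesis unfolding C_def by (cases "q < B'") auto
qed

lemma graded_E_rec:
  assumes "0 < s"
  shows "graded_E f q0 s h q = (\<Sum>l\<in>{2..m}. if l - 1 \<le> s then
           of_nat l *s graded_Ad f q0 l (graded_E f q0 (s - (l - 1)) h) q else 0)"
proof -
  let ?G = "\<lambda>ls. of_nat (prod_list ls) *s graded_Ad_chain f q0 ls h q"
  have nonempty: "ls \<noteq> []" if "ls \<in> engel_seqs0 m s" for ls
    using that assms by (auto simp: engel_seqs0_def)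
  have "graded_E f q0 s h q = (\<Sum>l\<in>{2..m}. \<Sum>ls\<in>{ls \<in> engel_seqs0 m s. hd ls = l}. ?G ls)"
    unfolding graded_E_def
  proof (rule sum.group[symmetric, OF finite_engel_seqs0])
    show "hd ` engel_seqs0 m s \<subseteq> {2..m}"
      using nonempty by (force simp: engel_seqs0_def neq_Nil_conv)
  qed simp
  also have "\<dots> = (\<Sum>l\<in>{2..m}. if l - 1 \<le> s then
           of_nat l *s graded_Ad f q0 l (graded_E f q0 (s - (l - 1)) h) q else 0)"
  proof (rule sum.cong[OF refl])
    fix l assume l: "l \<in> {2..m}"
    have "{ls \<in> engel_seqs0 m s. hd ls = l} = {ls \<in> engel_seqs0 m s. ls \<noteq> [] \<and> hd ls = l}"
      using nonempty by auto
    then have split: "{ls \<in> engel_seqs0 m s. hd ls = l} =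
        (if l - 1 \<le> s then Cons l ` engel_seqs0 m (s - (l - 1)) else {})"
      using engel_seqs0_hd[OF l, of s] by simp
    show "(\<Sum>ls\<in>{ls \<in> engel_seqs0 m s. hd ls = l}. ?G ls) = (if l - 1 \<le> s then
           of_nat l *s graded_Ad f q0 l (graded_E f q0 (s - (l - 1)) h) q else 0)"
    proof (cases "l - 1 \<le> s")
      case True
      have "(\<Sum>ls\<in>Cons l ` engel_seqs0 m (s - (l - 1)). ?G ls) = (\<Sum>ls\<in>engel_seqs0 m (s - (l - 1)). ?G (l # ls))"
        by (rule sum.reindex[unfolded comp_def]) simp
      also have "\<dots> = of_nat l *s (\<Sum>ls\<in>engel_seqs0 m (s - (l - 1)).
          of_nat (prod_list ls) *s graded_Ad f q0 l (graded_Ad_chain f q0 ls h) q)"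
        by (simp add: scale_sum_right mult.commute)
      also have "\<dots> = of_nat l *s graded_Ad f q0 l (graded_E f q0 (s - (l - 1)) h) q"
        unfolding graded_E_def by (simp add: graded_Ad_sum[OF l] graded_Ad_scale[OF l])
      finally show ?thesis using split True by simp
    qed (simp add: split)
  qed
  finally show ?thesis .
qed

lemma graded_E_unfold:
  "graded_E f q0 s h q = (if s = 0 then h q else 0) + (\<Sum>l\<in>{2..m}. if l - 1 \<le> s then
           of_nat l *s graded_Ad f q0 l (graded_E f q0 (s - (l - 1)) h) q else 0)"
proof (cases "s = 0")
  case True
  then have "(\<Sum>l\<in>{2..m}. if l - 1 \<le> s then
           of_nat l *s graded_Ad f q0 l (graded_E f q0 (s - (l - 1)) h) q else 0) = 0"
    by (intro sum.neutral) auto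
  then show ?thesis using True by (simp add: graded_E_0)
qed (simp add: graded_E_rec)

text \<open>Since the graded E_s vanish from s0 on, the finite sum of the E_s w inverts 1 - graded_L,
  just as the geometric series does.\<close>

lemma graded_E_partial_sum_fixpoint:
  assumes E: "\<And>s. s0 \<le> s \<Longrightarrow> graded_E f q0 s w = (\<lambda>_. 0)" and "1 \<le> s0"
  defines "T \<equiv> \<lambda>q. \<Sum>s<s0. graded_E f q0 s w q"
  shows "T q = w q + graded_L f q0 T q"
proof -
  let ?S = "s0 + m"
  let ?X = "\<lambda>l t. of_nat l *s graded_Ad f q0 l (graded_E f q0 t w) q"
  have "T q = (\<Sum>s<?S. graded_E f q0 s w q)"
    unfolding T_def by (rule sum.mono_neutral_cong_left) (auto simp: E)
  also have "\<dots> = (\<Sum>s<?S. (if s = 0 then w q else 0) +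
      (\<Sum>l\<in>{2..m}. if l - 1 \<le> s then ?X l (s - (l - 1)) else 0))"
    by (subst graded_E_unfold) simp
  also have "\<dots> = w q + (\<Sum>l\<in>{2..m}. \<Sum>s<?S. if l - 1 \<le> s then ?X l (s - (l - 1)) else 0)"
    using assms(2) by (simp add: sum.distrib sum.swap[of _ "{2..m}"])
  also have "\<dots> = w q + (\<Sum>l\<in>{2..m}. \<Sum>t<s0. ?X l t)"
  proof -
    have "(\<Sum>s<?S. if l - 1 \<le> s then ?X l (s - (l - 1)) else 0) = (\<Sum>t<s0. ?X l t)" if l: "l \<in> {2..m}" for l
      using l E graded_Ad_zero[OF l] by (intro sum_lessThan_shift) auto
    then show ?thesis by simp
  qed
  also have "(\<Sum>l\<in>{2..m}. \<Sum>t<s0. ?X l t) = graded_L f q0 T q"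
    unfolding graded_L_def T_def by (intro sum.cong refl) (simp add: graded_Ad_sum scale_sum_right)
  finally show ?thesis .
qed

end

locale yagzhev_lifting = multilinear_algebra scale m Psi
  for scale :: "'k::field_char_0 \<Rightarrow> 'a::ab_group_add \<Rightarrow> 'a" (infixr "*s" 75)
  and m :: nat and Psi :: "nat \<Rightarrow> 'a list \<Rightarrow> 'a" +
  fixes I :: "'a set" and f :: "nat \<Rightarrow> 'a" and q0 :: nat and s0 :: nat
  assumes sandwich: "\<And>l xs i j. l \<in> {2..m} \<Longrightarrow> length xs = l \<Longrightarrow> i < l \<Longrightarrow> j < l \<Longrightarrow> i \<noteq> j \<Longrightarrow>
      xs ! i \<in> I \<Longrightarrow> xs ! j \<in> I \<Longrightarrow> Psi l xs = 0"
    and large_in_ideal: "\<And>q. q0 \<le> q \<Longrightarrow> f q \<in> I"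
    and q0_pos: "1 \<le> q0"
    and recursion: "\<And>q. 2 \<le> q \<Longrightarrow> f q = (\<Sum>l\<in>{2..m}. \<Sum>ds\<in>compositions l q. Psi l (map f ds))"
    and engel: "\<And>s x y. s0 \<le> s \<Longrightarrow> E_op scale m Psi s x y = 0"
    and s0_pos: "1 \<le> s0"
begin

definition threshold :: nat where
  "threshold = m * q0 + 2"

definition single_large_at :: "nat \<Rightarrow> nat list \<Rightarrow> bool" where
  "single_large_at i ds \<longleftrightarrow> i < length ds \<and> q0 \<le> ds ! i \<and> set (remove_at i ds) \<subseteq> {..<q0}"

lemma exists_large_part:
  assumes "ds \<in> compositions l q" "threshold \<le> q" "l \<in> {2..m}"
  shows "\<exists>i<l. q0 \<le> ds ! i"
proof (rule ccontr)
  assume "\<not> (\<exists>i<l. q0 \<le> ds ! i)"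
  then have "\<forall>d\<in>set ds. d \<le> q0 - 1" using assms(1) by (force simp: compositions_def in_set_conv_nth)
  then have "sum_list ds \<le> length ds * (q0 - 1)" by (rule sum_list_le_length_mult)
  also have "\<dots> \<le> m * (q0 - 1)" using assms(1,3) by (intro mult_le_mono1) (auto simp: compositions_def)
  also have "\<dots> < threshold" unfolding threshold_def using q0_pos by (simp add: diff_mult_distrib2)
  finally show False using assms(1,2) by (auto simp: compositions_def)
qed

text \<open>Above the threshold some part of a composition is large, and two large parts
  make the product vanish since f maps them into the sandwich ideal.\<close>

lemma Psi_map_single_large:
  assumes ds: "ds \<in> compositions l q" and q: "threshold \<le> q" and l: "l \<in> {2..m}"
  shows "Psi l (map f ds) = (\<Sum>k<l. if single_large_at k ds then Psi l (map f ds) else 0)"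
proof -
  have len: "length ds = l" using ds by (simp add: compositions_def)
  obtain i where i: "i < l" "q0 \<le> ds ! i" using exists_large_part[OF ds q l] by blast
  have unique: "k = i" if "k < l" "single_large_at k ds" for k
  proof (rule ccontr)
    assume "k \<noteq> i"
    then have "ds ! i \<in> set (remove_at k ds)" using in_set_remove_at[of k ds] i that(1) len by auto
    then show False using i that(2) unfolding single_large_at_def by auto
  qed
  have "(\<Sum>k<l. if single_large_at k ds then Psi l (map f ds) else 0) =
      (\<Sum>k<l. if k = i then (if single_large_at i ds then Psi l (map f ds) else 0) else 0)"
    using unique by (intro sum.cong refl) auto
  also have "\<dots> = (if single_large_at i ds then Psi l (map f ds) else 0)"
    using i by simp
  also have "\<dots> = Psi l (map f ds)"
  proof (cases "single_large_at i ds")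
    case False
    then obtain x where "x \<in> set (remove_at i ds)" "q0 \<le> x"
      using i len unfolding single_large_at_def by (meson lessThan_iff not_le subsetI)
    then obtain j where j: "j < l" "j \<noteq> i" "q0 \<le> ds ! j"
      using in_set_remove_at[of i ds] i len by auto
    have "Psi l (map f ds) = 0"
      using sandwich[OF l _ i(1) j(1) j(2)[symmetric]] large_in_ideal i j len by auto
    then show ?thesis by simp
  qed simp
  finally show ?thesis ..
qed

lemma small_seqs_sum_bound:
  assumes "l \<in> {2..m}" "\<sigma> \<in> small_seqs q0 (l - 1)"
  shows "sum_list \<sigma> + q0 \<le> m * q0"
proof -
  have "sum_list \<sigma> \<le> (l - 1) * q0" using sum_list_small_seqs_le[OF assms(2)] .
  also have "\<dots> \<le> (m - 1) * q0" using assms(1) by (intro mult_le_mono1) auto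
  finally show ?thesis using assms(1) by (cases m) auto
qed

text \<open>Symmetry moves the single large part to the front; what remains is a small sequence,
  and the large part is determined by the total degree.\<close>

lemma sum_single_large_at:
  assumes q: "threshold \<le> q" and l: "l \<in> {2..m}" and i: "i < l"
  shows "(\<Sum>ds\<in>{ds \<in> compositions l q. single_large_at i ds}. Psi l (map f ds)) =
         (\<Sum>\<sigma>\<in>small_seqs q0 (l - 1). Psi l (f (q - sum_list \<sigma>) # map f \<sigma>))"
proof (rule sum.reindex_bij_witness[where i="\<lambda>\<sigma>. insert_at i (q - sum_list \<sigma>) \<sigma>" and j="remove_at i"])
  fix ds assume "ds \<in> {ds \<in> compositions l q. single_large_at i ds}"
  then have len: "length ds = l" and large: "single_large_at i ds" and ds: "ds \<in> compositions l q"
    by (auto simp: compositions_def)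
  have sum: "q = sum_list (remove_at i ds) + ds ! i"
    using sum_list_remove_at[of i ds] ds i len by (simp add: compositions_def)
  show "insert_at i (q - sum_list (remove_at i ds)) (remove_at i ds) = ds"
    using insert_at_remove_at[of i ds] sum i len by simp
  have "set (remove_at i ds) \<subseteq> set ds" using in_set_remove_at[of i ds] i len by (auto simp: in_set_conv_nth)
  then have "set (remove_at i ds) \<subseteq> {1..<q0}"
    using large ds unfolding single_large_at_def compositions_def by fastforce
  then show "remove_at i ds \<in> small_seqs q0 (l - 1)"
    using i len by (simp add: small_seqs_def length_remove_at)
  have "mset (map f ds) = mset (f (q - sum_list (remove_at i ds)) # map f (remove_at i ds))"
    using mset_remove_at[of i "map f ds"] sum i len by (simp add: remove_at_def take_map drop_map)
  then show "Psi l (f (q - sum_list (remove_at i ds)) # map f (remove_at i ds)) = Psi l (map f ds)"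
    using symmetric[OF l] len unfolding symmetric_op_def by (metis length_map)
next
  fix \<sigma> assume \<sigma>: "\<sigma> \<in> small_seqs q0 (l - 1)"
  have len\<sigma>: "length \<sigma> = l - 1" using \<sigma> by (simp add: small_seqs_def)
  have big: "sum_list \<sigma> + q0 < q"
    using small_seqs_sum_bound[OF l \<sigma>] q unfolding threshold_def by linarith
  have il: "i \<le> length \<sigma>" using i len\<sigma> by simp
  show "remove_at i (insert_at i (q - sum_list \<sigma>) \<sigma>) = \<sigma>" using remove_at_insert_at[OF il] .
  let ?ds = "insert_at i (q - sum_list \<sigma>) \<sigma>"
  have len: "length ?ds = l" using il len\<sigma> i by (simp add: insert_at_def)
  have nth: "?ds ! i = q - sum_list \<sigma>" using il by (simp add: insert_at_def nth_append)
  have "sum_list ?ds = sum_list \<sigma> + (q - sum_list \<sigma>)"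
    using sum_list_remove_at[of i ?ds] len i nth remove_at_insert_at[OF il] by simp
  then have sum: "sum_list ?ds = q" using big by linarith
  have "set ?ds = insert (q - sum_list \<sigma>) (set \<sigma>)"
    using append_take_drop_id[of i \<sigma>] set_append[of "take i \<sigma>" "drop i \<sigma>"]
    by (auto simp: insert_at_def)
  then have "set ?ds \<subseteq> {1..q}"
    using \<sigma> big member_le_sum_list[of _ \<sigma>] by (force simp: small_seqs_def)
  then have "?ds \<in> compositions l q" using len sum by (simp add: compositions_def)
  moreover have "single_large_at i ?ds"
    unfolding single_large_at_def using len i nth big remove_at_insert_at[OF il] \<sigma>
    by (auto simp: small_seqs_def)
  ultimately show "?ds \<in> {ds \<in> compositions l q. single_large_at i ds}" by simp
qed

lemma f_eq_graded_L:
  assumes q: "threshold \<le> q"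
  shows "f q = graded_L f q0 f q"
proof -
  have "f q = (\<Sum>l\<in>{2..m}. \<Sum>ds\<in>compositions l q. Psi l (map f ds))"
    using q by (intro recursion) (simp add: threshold_def)
  also have "\<dots> = (\<Sum>l\<in>{2..m}. of_nat l *s graded_Ad f q0 l f q)"
  proof (rule sum.cong[OF refl])
    fix l assume l: "l \<in> {2..m}"
    have "(\<Sum>ds\<in>compositions l q. Psi l (map f ds)) =
        (\<Sum>ds\<in>compositions l q. \<Sum>i<l. if single_large_at i ds then Psi l (map f ds) else 0)"
      using Psi_map_single_large[OF _ q l] by (intro sum.cong refl) auto
    also have "\<dots> = (\<Sum>i<l. \<Sum>ds\<in>{ds \<in> compositions l q. single_large_at i ds}. Psi l (map f ds))"
      by (subst sum.swap) (simp add: sum.inter_filter finite_compositions)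
    also have "\<dots> = (\<Sum>i<l. \<Sum>\<sigma>\<in>small_seqs q0 (l - 1). Psi l (f (q - sum_list \<sigma>) # map f \<sigma>))"
      using sum_single_large_at[OF q l] by simp
    also have "\<dots> = of_nat l *s graded_Ad f q0 l f q"
    proof -
      have "sum_list \<sigma> \<le> q" if "\<sigma> \<in> small_seqs q0 (l - 1)" for \<sigma>
        using small_seqs_sum_bound[OF l that] q unfolding threshold_def by linarith
      then show ?thesis by (simp add: graded_Ad_def sum_constant_scale cong: sum.cong)
    qed
    finally show "(\<Sum>ds\<in>compositions l q. Psi l (map f ds)) = of_nat l *s graded_Ad f q0 l f q" .
  qed
  finally show ?thesis unfolding graded_L_def .
qed

lemma f_eq_0_beyond:
  assumes "2 * (m + s0) * q0 + 2 \<le> q"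
  shows "f q = 0"
proof -
  define u where "u i = (if i < threshold then f i else 0)" for i
  define v where "v i = (if threshold \<le> i then f i else 0)" for i
  define w where "w q = (if threshold \<le> q then graded_L f q0 u q else 0)" for q
  define W where "W = threshold + m * q0"
  define T where "T q = (\<Sum>s<s0. graded_E f q0 s w q)" for q
  have w_support: "\<forall>i\<ge>W. w i = 0"
    using graded_L_support[of threshold u] unfolding w_def W_def u_def by auto
  have v_fix: "v q = w q + graded_L f q0 v q" for q
  proof (cases "threshold \<le> q")
    case True
    have "f = (\<lambda>i. u i + v i)" by (auto simp: u_def v_def)
    then have "graded_L f q0 f q = graded_L f q0 u q + graded_L f q0 v q"
      by (simp add: graded_L_add[symmetric])
    then show ?thesis using True f_eq_graded_L[OF True] by (simp add: v_def w_def)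
  next
    case False
    then show ?thesis by (simp add: v_def w_def graded_L_zero_below)
  qed
  have "graded_E f q0 s w = (\<lambda>_. 0)" if "s0 \<le> s" for s
    using graded_E_eq_0[OF engel[OF that] _ w_support] that s0_pos by auto
  then have T_fix: "T q = w q + graded_L f q0 T q" for q
    using graded_E_partial_sum_fixpoint[OF _ s0_pos] unfolding T_def by blast
  have "T q = 0" if "W + 2 * s0 * q0 \<le> q" for q
    unfolding T_def
  proof (intro sum.neutral ballI)
    fix s assume "s \<in> {..<s0}"
    then have "2 * s * q0 \<le> 2 * s0 * q0" by (intro mult_le_mono1) auto
    then show "graded_E f q0 s w q = 0" using that by (intro graded_E_support[OF w_support]) linarith
  qed
  moreover have "W + 2 * s0 * q0 \<le> q" "threshold \<le> q"
    using assms by (simp_all add: W_def threshold_def algebra_simps)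
  ultimately show "f q = 0"
    using graded_L_fixpoint_unique[OF v_fix T_fix, of q] by (simp add: v_def)
qed

end

lemma sandwich_ideal_Psi_eq_0:
  assumes sw: "sandwich_ideal scale m Psi I" and sym: "symmetric_op l (Psi l)"
    and l: "l \<in> {2..m}" and len: "length xs = l"
    and ij: "i < l" "j < l" "i \<noteq> j" and I: "xs ! i \<in> I" "xs ! j \<in> I"
  shows "Psi l xs = 0"
  using ij I
proof (induction i j rule: linorder_wlog)
  case (le i j)
  then have ij: "i < j" "j < l" by auto
  define rest where "rest = remove_at (j - 1) (remove_at i xs)"
  have "remove_at i xs ! (j - 1) = xs ! j"
    using ij len by (auto simp: nth_remove_at length_remove_at)
  then have "mset xs = mset (xs ! i # xs ! j # rest)"
    using mset_remove_at[of i xs] mset_remove_at[of "j - 1" "remove_at i xs"] ij len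
    by (simp add: rest_def length_remove_at)
  then have "Psi l xs = Psi l (xs ! i # xs ! j # rest)"
    using sym len unfolding symmetric_op_def by blast
  also have "\<dots> = eval_tm Psi (\<lambda>k. if k = 0 then xs ! i else if k = 1 then xs ! j else rest ! (k - 2))
      (Op (map V [0..<l]))"
  proof -
    have "map (\<lambda>k. if k = 0 then xs ! i else if k = 1 then xs ! j else rest ! (k - 2)) [0..<l] =
        xs ! i # xs ! j # rest"
      using l ij len by (intro nth_equalityI) (auto simp: rest_def length_remove_at nth_Cons' numeral_2_eq_2)
    then show ?thesis by (simp add: comp_def)
  qed
  also have "\<dots> = 0"
  proof -
    have vanish: "\<And>k M z1 z2 ys. wf_tm m M \<Longrightarrow> mset (leaves M) = mset [0..<k + 2] \<Longrightarrow>
        z1 \<in> I \<Longrightarrow> z2 \<in> I \<Longrightarrow> length ys = k \<Longrightarrow>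
        eval_tm Psi (\<lambda>i. if i = 0 then z1 else if i = 1 then z2 else ys ! (i - 2)) M = 0"
      using sw unfolding sandwich_ideal_def by blast
    have "l - 2 + 2 = l" using l by auto
    then have leaves: "mset (leaves (Op (map V [0..<l]))) = mset [0..<(l - 2) + 2]"
      by (simp add: comp_def concat_map_singleton)
    have "length rest = l - 2" using ij len by (simp add: rest_def length_remove_at)
    moreover have "wf_tm m (Op (map V [0..<l]))" using l by simp
    ultimately show ?thesis using vanish[OF _ leaves le.prems(4,5)] by blast
  qed
  finally show ?case .
qed blast

context multilinear_algebra
begin

lemma yagzhev_sum_eq_0_beyond:
  assumes sw: "sandwich_ideal scale m Psi I"
    and "\<And>a q. q0 \<le> q \<Longrightarrow> (\<Sum>t\<in>terms_deg m q. eval_tm Psi (\<lambda>_. a) t) \<in> I" "1 \<le> q0"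
    and "\<And>s x y. s0 \<le> s \<Longrightarrow> E_op scale m Psi s x y = 0" "1 \<le> s0"
    and q: "2 * (m + s0) * q0 + 2 \<le> q"
  shows "(\<Sum>t\<in>terms_deg m q. eval_tm Psi (\<lambda>_. a) t) = 0"
proof -
  define f where "f q = (\<Sum>t\<in>terms_deg m q. eval_tm Psi (\<lambda>_. a) t)" for q
  interpret yagzhev_lifting scale m Psi I f q0 s0
  proof
    show "Psi l xs = 0" if "l \<in> {2..m}" "length xs = l" "i < l" "j < l" "i \<noteq> j"
      "xs ! i \<in> I" "xs ! j \<in> I" for l xs i j
      using sandwich_ideal_Psi_eq_0[OF sw symmetric] that by blast
    show "f q = (\<Sum>l\<in>{2..m}. \<Sum>ds\<in>compositions l q. Psi l (map f ds))" if "2 \<le> q" for q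
      using yagzhev_sum_recursion[OF that] unfolding f_def .
  qed (use assms in \<open>simp_all add: f_def\<close>)
  show ?thesis using f_eq_0_beyond[OF q] unfolding f_def .
qed

end

theorem mainTheorem4:
  fixes scale :: "'k::field_char_0 \<Rightarrow> 'a::ab_group_add \<Rightarrow> 'a"
    and m :: nat and Psi :: "nat \<Rightarrow> 'a list \<Rightarrow> 'a" and I :: "'a set"
  assumes "algebra_ops scale m Psi"
    and "engel_type scale m Psi"
    and "sandwich_ideal scale m Psi I"
    and "yagzhev_mod m Psi I"
  shows "yagzhev m Psi"
proof -
  interpret multilinear_algebra scale m Psi
    using assms(1) by (simp add: algebra_ops_def multilinear_algebra_def multilinear_algebra_axioms_def)
  obtain q1 where q1: "\<And>a q. q1 \<le> q \<Longrightarrow> (\<Sum>t\<in>terms_deg m q. eval_tm Psi (\<lambda>_. a) t) \<in> I"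
    using assms(4) unfolding yagzhev_mod_def by blast
  obtain s1 where s1: "\<And>s x y. s1 \<le> s \<Longrightarrow> E_op scale m Psi s x y = 0"
    using assms(2) unfolding engel_type_def by blast
  have "(\<Sum>t\<in>terms_deg m q. eval_tm Psi (\<lambda>_. a) t) = 0"
    if "2 * (m + max s1 1) * max q1 1 + 2 \<le> q" for a q
    using yagzhev_sum_eq_0_beyond[OF assms(3) _ _ _ _ that] q1 s1 by simp
  then show ?thesis unfolding yagzhev_def by blast
qed

end
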